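(* Let $d\ge 1$, $T\ge 1$, let $\mathcal{X}\subseteq\mathbb{R}^d$ be a non-empty closed convex set, and let $0<\mu\le L$. Let $f_1,\dots,f_T:\mathcal{X}\to[0,\infty)$ be differentiable with $\frac{\mu}{2}\|y-x\|^2\le f_t(y)-f_t(x)-\langle\nabla f_t(x),y-x\rangle\le\frac{L}{2}\|y-x\|^2$ for all $t$ and $x,y\in\mathcal{X}$. Let $x_1,\dots,x_T$ be the iterates of the OMGD algorithm with $K=\lceil\frac{L+\mu}{2\mu}\ln4\rceil$ from a starting point $x_0\in\mathcal{X}$. Then $$\sum_{t=1}^T\|x_t-x_t^\star\|^2\le 2\|x_1-x_1^\star\|^2+4\mathcal{P}_{2,T}^\star.$$
   Context: $x_t^\star=\arg\min_{x\in\mathcal{X}}f_t(x)$ and $\mathcal{P}_{2,T}^\star=\sum_{t=2}^T\|x_t^\star-x_{t-1}^\star\|^2$. OMGD with parameter $K$: $x_1=x_0$; for $t=2,\dots,T$, $z_t^{(0)}=x_{t-1}$, $z_t^{(k)}=\Pi_{\mathcal{X}}\big(z_t^{(k-1)}-\frac1L\nabla f_{t-1}(z_t^{(k-1)})\big)$ ($k=1,\dots,K$), $x_t=z_t^{(K)}$, where $\Pi_{\mathcal{X}}$ is Euclidean projection onto $\mathcal{X}$. *)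

theory Defs
  imports "HOL-Analysis.Analysis"
begin

definition argmin_on :: "'a set \<Rightarrow> ('a \<Rightarrow> real) \<Rightarrow> 'a" where
  "argmin_on X h = (SOME x. x \<in> X \<and> (\<forall>y\<in>X. h x \<le> h y))"

definition pgd_step :: "'a::euclidean_space set \<Rightarrow> real \<Rightarrow> ('a \<Rightarrow> 'a) \<Rightarrow> 'a \<Rightarrow> 'a" where
  "pgd_step X L gr z = closest_point X (z - (1 / L) *\<^sub>R gr z)"

fun omgd :: "'a::euclidean_space set \<Rightarrow> real \<Rightarrow> (nat \<Rightarrow> 'a \<Rightarrow> 'a) \<Rightarrow> nat \<Rightarrow> 'a \<Rightarrow> nat \<Rightarrow> 'a" where
  "omgd X L g K x0 0 = x0"
| "omgd X L g K x0 (Suc 0) = x0"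
| "omgd X L g K x0 (Suc (Suc n)) = (pgd_step X L (g (Suc n)) ^^ K) (omgd X L g K x0 (Suc n))"

end

theory Submission
  imports Defs
begin

text \<open>For a \<open>\<mu>\<close>-strongly convex, \<open>L\<close>-smooth function with minimizer \<open>m\<close> on \<open>X\<close>, a projected
  gradient step with step size \<open>1/L\<close> shrinks the squared distance to \<open>m\<close> by the factor
  \<open>(L - \<mu>)/(L + \<mu>) \<le> exp (-2\<mu>/(L + \<mu>))\<close>, so the choice of \<open>K\<close> makes the \<open>K\<close> inner steps
  shrink it by at least \<open>1/4\<close>. With \<open>a\<^sub>t = \<parallel>x\<^sub>t - x\<^sub>t\<^sup>\<star>\<parallel>\<^sup>2\<close> and \<open>\<parallel>u + v\<parallel>\<^sup>2 \<le> 2\<parallel>u\<parallel>\<^sup>2 + 2\<parallel>v\<parallel>\<^sup>2\<close>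
  this gives \<open>2 a\<^sub>t \<le> a\<^sub>t\<^sub>-\<^sub>1 + 4\<parallel>x\<^sub>t\<^sup>\<star> - x\<^sub>t\<^sub>-\<^sub>1\<^sup>\<star>\<parallel>\<^sup>2\<close>, and summing this recurrence over
  \<open>t = 2..T\<close> yields the bound.\<close>

lemma strongly_convex_attains_min:
  fixes X :: "'a::euclidean_space set" and h :: "'a \<Rightarrow> real"
  assumes "closed X" "X \<noteq> {}" "0 < \<mu>" "continuous_on X h"
    and lower: "\<And>x y. x \<in> X \<Longrightarrow> y \<in> X \<Longrightarrow>
                  \<mu> / 2 * (norm (y - x))\<^sup>2 \<le> h y - h x - gr x \<bullet> (y - x)"
  shows "\<exists>m\<in>X. \<forall>y\<in>X. h m \<le> h y"
proof -
  obtain a where a: "a \<in> X" using assms(2) by blast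
  define R where "R = 2 * norm (gr a) / \<mu>"
  define S where "S = X \<inter> cball a R"
  have "compact S" unfolding S_def using assms(1) by (simp add: closed_Int_compact)
  moreover have "a \<in> S" using a assms(3) by (simp add: S_def R_def)
  moreover have "continuous_on S h" using assms(4) by (rule continuous_on_subset) (simp add: S_def)
  ultimately obtain m where m: "m \<in> S" and min_S: "\<And>y. y \<in> S \<Longrightarrow> h m \<le> h y"
    using continuous_attains_inf by (metis empty_iff)
  have far: "h a \<le> h y" if y: "y \<in> X" "R < norm (y - a)" for y
  proof -
    have "norm (gr a) \<le> \<mu> / 2 * norm (y - a)"
      using y(2) assms(3) by (simp add: R_def field_simps)
    then have "norm (gr a) * norm (y - a) \<le> \<mu> / 2 * norm (y - a) * norm (y - a)"
      by (rule mult_right_mono) simp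
    then have "norm (gr a) * norm (y - a) \<le> \<mu> / 2 * (norm (y - a))\<^sup>2"
      by (simp add: power2_eq_square mult.assoc)
    moreover have "- (gr a \<bullet> (y - a)) \<le> norm (gr a) * norm (y - a)"
      using Cauchy_Schwarz_ineq2[of "gr a" "y - a"] by linarith
    ultimately show ?thesis using lower[OF a y(1)] by linarith
  qed
  have "h m \<le> h y" if "y \<in> X" for y
  proof (cases "y \<in> cball a R")
    case True
    then show ?thesis using min_S that by (simp add: S_def)
  next
    case False
    then show ?thesis using far[OF that] min_S[OF \<open>a \<in> S\<close>] by (simp add: dist_norm norm_minus_commute)
  qed
  then show ?thesis using m by (auto simp: S_def)
qed

lemma argmin_on_minimal:
  assumes "\<exists>m\<in>X. \<forall>y\<in>X. h m \<le> h y"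
  shows "argmin_on X h \<in> X" and "\<And>y. y \<in> X \<Longrightarrow> h (argmin_on X h) \<le> h y"
  using someI_ex[of "\<lambda>m. m \<in> X \<and> (\<forall>y\<in>X. h m \<le> h y)"] assms
  unfolding argmin_on_def by blast+

lemma smooth_minimizer_first_order:
  fixes X :: "'a::real_inner set" and h :: "'a \<Rightarrow> real"
  assumes "convex X" "0 < L" "m \<in> X" "y \<in> X"
    and min: "\<And>y. y \<in> X \<Longrightarrow> h m \<le> h y"
    and upper: "\<And>x y. x \<in> X \<Longrightarrow> y \<in> X \<Longrightarrow>
                  h y - h x - gr x \<bullet> (y - x) \<le> L / 2 * (norm (y - x))\<^sup>2"
  shows "gr m \<bullet> (y - m) \<ge> 0"
proof (rule ccontr)
  define d where "d = y - m"
  define c where "c = gr m \<bullet> d"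
  assume "\<not> gr m \<bullet> (y - m) \<ge> 0"
  then have c: "c < 0" by (simp add: c_def d_def)
  then have Ld: "0 < L * (norm d)\<^sup>2" using assms(2) by (cases "d = 0") (auto simp: c_def)
  define s where "s = min 1 (- c / (L * (norm d)\<^sup>2))"
  have s: "0 < s" "s \<le> 1" using c Ld by (auto simp: s_def divide_neg_pos)
  have "s \<le> - c / (L * (norm d)\<^sup>2)" by (simp add: s_def)
  then have sL: "L * s * (norm d)\<^sup>2 \<le> - c" using Ld by (simp add: field_simps)
  have "m + s *\<^sub>R d = (1 - s) *\<^sub>R m + s *\<^sub>R y" by (simp add: d_def algebra_simps)
  then have ys: "m + s *\<^sub>R d \<in> X" using assms(1,3,4) s by (simp add: convex_def)
  \<comment> \<open>for small \<open>s\<close> the linear term \<open>s * c < 0\<close> dominates the quadratic one\<close>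
  have "h (m + s *\<^sub>R d) - h m - s * c \<le> L / 2 * (s\<^sup>2 * (norm d)\<^sup>2)"
    using upper[OF assms(3) ys] by (simp add: c_def power_mult_distrib)
  moreover have "h m \<le> h (m + s *\<^sub>R d)" using min ys by blast
  ultimately have "s * (- c) \<le> s * (L / 2 * s * (norm d)\<^sup>2)"
    by (simp add: power2_eq_square algebra_simps)
  then have "- c \<le> L / 2 * s * (norm d)\<^sup>2" using s(1) by (rule mult_left_le_imp_le)
  then show False using sL c by linarith
qed

lemma pgd_step_in: "closed X \<Longrightarrow> X \<noteq> {} \<Longrightarrow> pgd_step X L gr z \<in> X"
  by (simp add: pgd_step_def closest_point_in_set)

lemma funpow_pgd_step_in: "closed X \<Longrightarrow> X \<noteq> {} \<Longrightarrow> z \<in> X \<Longrightarrow> (pgd_step X L gr ^^ K) z \<in> X"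
  by (cases K) (simp_all add: pgd_step_in)

lemma omgd_in: "closed X \<Longrightarrow> X \<noteq> {} \<Longrightarrow> x0 \<in> X \<Longrightarrow> omgd X L g K x0 t \<in> X"
  by (induction X L g K x0 t rule: omgd.induct) (simp_all add: funpow_pgd_step_in)

lemma pgd_step_contraction:
  fixes X :: "'a::euclidean_space set" and h :: "'a \<Rightarrow> real"
  assumes "convex X" "closed X" "0 < L" "z \<in> X" "m \<in> X"
    and min: "\<And>y. y \<in> X \<Longrightarrow> h m \<le> h y"
    and lower: "\<And>x y. x \<in> X \<Longrightarrow> y \<in> X \<Longrightarrow>
                  \<mu> / 2 * (norm (y - x))\<^sup>2 \<le> h y - h x - gr x \<bullet> (y - x)"
    and upper: "\<And>x y. x \<in> X \<Longrightarrow> y \<in> X \<Longrightarrow>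
                  h y - h x - gr x \<bullet> (y - x) \<le> L / 2 * (norm (y - x))\<^sup>2"
  shows "(L + \<mu>) * (norm (pgd_step X L gr z - m))\<^sup>2 \<le> (L - \<mu>) * (norm (z - m))\<^sup>2"
proof -
  define p where "p = pgd_step X L gr z"
  define u where "u = z - p"
  define v where "v = p - m"
  have p: "p \<in> X" unfolding p_def using assms(2,4) by (blast intro: pgd_step_in)
  have "(z - (1 / L) *\<^sub>R gr z - p) \<bullet> (m - p) \<le> 0"
    unfolding p_def pgd_step_def using assms(1,2,5) by (rule closest_point_dot)
  then have "(1 / L) * (gr z \<bullet> v) \<le> u \<bullet> v"
    by (simp add: u_def v_def algebra_simps inner_diff_left inner_diff_right)
  then have proj: "gr z \<bullet> v \<le> L * (u \<bullet> v)" using assms(3) by (simp add: field_simps)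
  have "\<mu> / 2 * (v \<bullet> v) \<le> h p - h m"
    using lower[OF assms(5) p] smooth_minimizer_first_order[OF assms(1,3,5) p min upper]
    by (simp add: v_def power2_norm_eq_inner)
  also have "\<dots> \<le> gr z \<bullet> v + L / 2 * (u \<bullet> u) - \<mu> / 2 * ((u + v) \<bullet> (u + v))"
    using upper[OF assms(4) p] lower[OF assms(4,5)]
    by (simp add: u_def v_def power2_norm_eq_inner inner_diff_left inner_diff_right algebra_simps)
  also have "\<dots> \<le> L * (u \<bullet> v) + L / 2 * (u \<bullet> u) - \<mu> / 2 * ((u + v) \<bullet> (u + v))"
    using proj by simp
  finally have "(L + \<mu>) * (v \<bullet> v) \<le> (L - \<mu>) * ((u + v) \<bullet> (u + v))"
    by (simp add: inner_add_left inner_add_right inner_commute[of v u] algebra_simps)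
  then show ?thesis
    by (simp add: p_def[symmetric] u_def v_def power2_norm_eq_inner)
qed

lemma funpow_pgd_step_contraction:
  fixes X :: "'a::euclidean_space set" and h :: "'a \<Rightarrow> real"
  assumes "convex X" "closed X" "0 < \<mu>" "\<mu> \<le> L" "z \<in> X" "m \<in> X"
    and min: "\<And>y. y \<in> X \<Longrightarrow> h m \<le> h y"
    and lower: "\<And>x y. x \<in> X \<Longrightarrow> y \<in> X \<Longrightarrow>
                  \<mu> / 2 * (norm (y - x))\<^sup>2 \<le> h y - h x - gr x \<bullet> (y - x)"
    and upper: "\<And>x y. x \<in> X \<Longrightarrow> y \<in> X \<Longrightarrow>
                  h y - h x - gr x \<bullet> (y - x) \<le> L / 2 * (norm (y - x))\<^sup>2"
  shows "(norm ((pgd_step X L gr ^^ K) z - m))\<^sup>2 \<le> ((L - \<mu>) / (L + \<mu>)) ^ K * (norm (z - m))\<^sup>2"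
proof (induction K)
  case 0
  show ?case by simp
next
  case (Suc K)
  define w where "w = (pgd_step X L gr ^^ K) z"
  have w: "w \<in> X" unfolding w_def using assms(2,5) by (blast intro: funpow_pgd_step_in)
  have "0 < L + \<mu>" "0 \<le> (L - \<mu>) / (L + \<mu>)" using assms(3,4) by simp_all
  have "(norm (pgd_step X L gr w - m))\<^sup>2 \<le> (L - \<mu>) / (L + \<mu>) * (norm (w - m))\<^sup>2"
    using pgd_step_contraction[OF assms(1,2) _ w assms(6) min lower upper] assms(3,4) \<open>0 < L + \<mu>\<close>
    by (simp add: field_simps)
  also have "\<dots> \<le> (L - \<mu>) / (L + \<mu>) * (((L - \<mu>) / (L + \<mu>)) ^ K * (norm (z - m))\<^sup>2)"
    using Suc.IH \<open>0 \<le> (L - \<mu>) / (L + \<mu>)\<close> unfolding w_def by (rule mult_left_mono)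
  finally show ?case by (simp add: w_def mult.assoc)
qed

lemma contraction_factor_power_le_quarter:
  fixes \<mu> L :: real
  assumes "0 < \<mu>" "\<mu> \<le> L"
  shows "((L - \<mu>) / (L + \<mu>)) ^ nat \<lceil>(L + \<mu>) / (2 * \<mu>) * ln 4\<rceil> \<le> 1 / 4"
proof -
  define K where "K = nat \<lceil>(L + \<mu>) / (2 * \<mu>) * ln 4\<rceil>"
  define r where "r = 2 * \<mu> / (L + \<mu>)"
  have r: "0 < r" "r \<le> 1" "(L - \<mu>) / (L + \<mu>) = 1 - r" using assms by (simp_all add: r_def field_simps)
  have "ln 4 \<le> r * K"
  proof -
    have "(L + \<mu>) / (2 * \<mu>) * ln 4 \<le> K" unfolding K_def by (rule real_nat_ceiling_ge)
    then have "r * ((L + \<mu>) / (2 * \<mu>) * ln 4) \<le> r * K" by (rule mult_left_mono) (use r(1) in simp)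
    then show ?thesis using assms by (simp add: r_def)
  qed
  have "(1 - r) ^ K \<le> exp (- r) ^ K"
    using exp_ge_add_one_self[of "- r"] r(2) by (intro power_mono) simp_all
  also have "\<dots> = exp (- (r * K))" by (simp add: exp_of_nat_mult[symmetric] mult.commute)
  also have "\<dots> \<le> exp (- ln 4)" using \<open>ln 4 \<le> r * K\<close> by simp
  also have "\<dots> = 1 / 4" by (simp add: exp_minus)
  finally show ?thesis by (simp add: r(3) K_def)
qed

lemma sum_le_of_halving_recurrence:
  fixes a d :: "nat \<Rightarrow> real"
  assumes "1 \<le> T" and "\<And>t. 2 \<le> t \<Longrightarrow> t \<le> T \<Longrightarrow> 2 * a t \<le> a (t - 1) + 4 * d t"
  shows "(\<Sum>t=1..T. a t) + a T \<le> 2 * a 1 + 4 * (\<Sum>t=2..T. d t)"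
  using assms
proof (induction T rule: nat_induct_at_least)
  case base
  then show ?case by simp
next
  case (Suc n)
  have "(\<Sum>t=1..n. a t) + a n \<le> 2 * a 1 + 4 * (\<Sum>t=2..n. d t)" using Suc by simp
  moreover have "2 * a (Suc n) \<le> a n + 4 * d (Suc n)" using Suc.prems[of "Suc n"] Suc.hyps by simp
  ultimately show ?case using Suc.hyps by (simp add: distrib_left)
qed

lemma power2_norm_diff_le_after_quarter:
  fixes x y m m' :: "'a::real_normed_vector"
  assumes "(norm (y - m))\<^sup>2 \<le> (norm (x - m))\<^sup>2 / 4"
  shows "2 * (norm (y - m'))\<^sup>2 \<le> (norm (x - m))\<^sup>2 + 4 * (norm (m' - m))\<^sup>2"
proof -
  have "norm (y - m') \<le> norm (y - m) + norm (m' - m)"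
    using norm_triangle_ineq4[of "y - m" "m' - m"] by simp
  then have "(norm (y - m'))\<^sup>2 \<le> (norm (y - m) + norm (m' - m))\<^sup>2" by (simp add: power_mono)
  also have "\<dots> \<le> 2 * (norm (y - m))\<^sup>2 + 2 * (norm (m' - m))\<^sup>2"
    using sum_squares_bound[of "norm (y - m)" "norm (m' - m)"] by (simp add: power2_sum)
  finally show ?thesis using assms by linarith
qed

theorem lemma1:
  fixes X :: "'a::euclidean_space set"
    and f :: "nat \<Rightarrow> 'a \<Rightarrow> real"
    and g :: "nat \<Rightarrow> 'a \<Rightarrow> 'a"
    and \<mu> L :: real and T :: nat and x0 :: 'a
  assumes "T \<ge> 1"
    and "X \<noteq> {}" and "closed X" and "convex X"
    and "0 < \<mu>" and "\<mu> \<le> L"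
    and "\<And>t x. 1 \<le> t \<Longrightarrow> t \<le> T \<Longrightarrow> x \<in> X \<Longrightarrow> f t x \<ge> 0"
    and "\<And>t x. 1 \<le> t \<Longrightarrow> t \<le> T \<Longrightarrow> x \<in> X \<Longrightarrow>
           (f t has_derivative (\<lambda>h. g t x \<bullet> h)) (at x within X)"
    and "\<And>t x y. 1 \<le> t \<Longrightarrow> t \<le> T \<Longrightarrow> x \<in> X \<Longrightarrow> y \<in> X \<Longrightarrow>
           \<mu> / 2 * (norm (y - x))\<^sup>2 \<le> f t y - f t x - g t x \<bullet> (y - x)"
    and "\<And>t x y. 1 \<le> t \<Longrightarrow> t \<le> T \<Longrightarrow> x \<in> X \<Longrightarrow> y \<in> X \<Longrightarrow>
           f t y - f t x - g t x \<bullet> (y - x) \<le> L / 2 * (norm (y - x))\<^sup>2"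
    and "x0 \<in> X"
  shows "(\<Sum>t=1..T. (norm (omgd X L g (nat \<lceil>(L + \<mu>) / (2 * \<mu>) * ln 4\<rceil>) x0 t
                             - argmin_on X (f t)))\<^sup>2)
         \<le> 2 * (norm (omgd X L g (nat \<lceil>(L + \<mu>) / (2 * \<mu>) * ln 4\<rceil>) x0 1
                      - argmin_on X (f 1)))\<^sup>2
           + 4 * (\<Sum>t=2..T. (norm (argmin_on X (f t) - argmin_on X (f (t - 1))))\<^sup>2)"
proof -
  define K where "K = nat \<lceil>(L + \<mu>) / (2 * \<mu>) * ln 4\<rceil>"
  define x where "x = omgd X L g K x0"
  define xs where "xs t = argmin_on X (f t)" for t
  have xs: "xs t \<in> X" "\<And>y. y \<in> X \<Longrightarrow> f t (xs t) \<le> f t y" if "1 \<le> t" "t \<le> T" for t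
  proof -
    have "continuous_on X (f t)" using assms(8)[OF that] by (rule has_derivative_continuous_on)
    then have "\<exists>m\<in>X. \<forall>y\<in>X. f t m \<le> f t y"
      using strongly_convex_attains_min[OF assms(3,2,5)] assms(9)[OF that] by blast
    then show "xs t \<in> X" "\<And>y. y \<in> X \<Longrightarrow> f t (xs t) \<le> f t y"
      unfolding xs_def by (rule argmin_on_minimal)+
  qed
  have rec: "2 * (norm (x t - xs t))\<^sup>2
               \<le> (norm (x (t - 1) - xs (t - 1)))\<^sup>2 + 4 * (norm (xs t - xs (t - 1)))\<^sup>2"
    if "2 \<le> t" "t \<le> T" for t
  proof -
    obtain n where t: "t = Suc (Suc n)" using \<open>2 \<le> t\<close> by (metis add_2_eq_Suc le_Suc_ex)
    have n: "1 \<le> Suc n" "Suc n \<le> T" using that t by simp_all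
    have "(norm (x t - xs (Suc n)))\<^sup>2 \<le> ((L - \<mu>) / (L + \<mu>)) ^ K * (norm (x (Suc n) - xs (Suc n)))\<^sup>2"
      unfolding t x_def omgd.simps
      using assms(9,10)[OF n]
      by (intro funpow_pgd_step_contraction[where h = "f (Suc n)",
                OF assms(4,3,5,6) omgd_in[OF assms(3,2,11)] xs[OF n]])
    also have "\<dots> \<le> (norm (x (Suc n) - xs (Suc n)))\<^sup>2 / 4"
      using mult_right_mono[OF contraction_factor_power_le_quarter[OF assms(5,6)] zero_le_power2]
      by (simp add: K_def)
    finally show ?thesis using t by (simp add: power2_norm_diff_le_after_quarter)
  qed
  have "(\<Sum>t=1..T. (norm (x t - xs t))\<^sup>2) + (norm (x T - xs T))\<^sup>2
          \<le> 2 * (norm (x 1 - xs 1))\<^sup>2 + 4 * (\<Sum>t=2..T. (norm (xs t - xs (t - 1)))\<^sup>2)"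
    using assms(1) rec by (rule sum_le_of_halving_recurrence)
  moreover have "0 \<le> (norm (x T - xs T))\<^sup>2" by simp
  ultimately show ?thesis unfolding K_def x_def xs_def by linarith
qed

end
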